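(* Let $0<R_1<R_2\le\infty$, $A=\{x\in\mathbb{R}^2: R_1<\|x\|<R_2\}$, $B=\{y\in\mathbb{R}^2:\|y\|<R_1\}$. For $2\le\nu<\infty$ let $A_\nu=\{u\in\mathbb{R}^2: R_1^{1/\nu}<\|u\|<R_2^{1/\nu}\}$ and $p_\nu:A_\nu\to A$, $p_\nu(u)=u^\nu$ (where $u=(u_1,u_2)$ is identified with $u_1+iu_2\in\mathbb{C}$ and $x=(x_1,x_2)$ with $x_1+ix_2$); for $\nu=\infty$ let $A_\infty=\{(u_1,u_2)\in\mathbb{R}^2:\log R_1<u_1<\log R_2\}$ and $p_\infty(u_1,u_2)=(e^{u_1}\cos u_2,e^{u_1}\sin u_2)$. Let $\Omega_\nu=A_\nu\times B$ with projection $\pi_\nu(u,y)=p_\nu(u)+iy\in\mathbb{C}^2$. Then for every $2\le\nu\le\infty$, $\pi_\nu:\Omega_\nu\to\mathbb{C}^2$ is a $\nu$-sheeted (infinitely sheeted for $\nu=\infty$) holomorphically separable unramified domain over $\mathbb{C}^2$, and its envelope of holomorphy $\hat\pi_\nu:\hat\Omega_\nu\to\mathbb{C}^2$ is not univalent and satisfies $0\notin\hat\pi_\nu(\hat\Omega_\nu)$.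
   Context: An unramified domain over $\mathbb{C}^n$ is a connected Hausdorff space $\mathfrak D$ with a local homeomorphism $\pi:\mathfrak D\to\mathbb{C}^n$, carrying the complex structure making $\pi$ locally biholomorphic; it is univalent if $\pi$ is injective. It is holomorphically separable if for any two distinct points $p\ne q$ with $\pi(p)=\pi(q)$ there is $f\in\mathcal O(\mathfrak D)$ whose germs at $p$ and $q$ (as power series in the coordinates $\pi$) differ. The envelope of holomorphy $\hat\pi:\hat{\mathfrak D}\to\mathbb{C}^n$ is the maximal domain over $\mathbb{C}^n$, containing $\mathfrak D$ when $\mathfrak D$ is holomorphically separable, to which all $f\in\mathcal O(\mathfrak D)$ simultaneously extend analytically. *)

theory Defs
  imports "HOL-Analysis.Analysis" "HOL-Library.Extended_Nat"
begin

definition holo2 :: "(complex \<times> complex \<Rightarrow> complex) \<Rightarrow> (complex \<times> complex) set \<Rightarrow> bool" where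
  "holo2 f U \<longleftrightarrow> open U \<and>
     (\<forall>z\<in>U. \<exists>a b. (f has_derivative (\<lambda>h. a * fst h + b * snd h)) (at z))"

definition riemann_domain :: "'a topology \<Rightarrow> ('a \<Rightarrow> complex \<times> complex) \<Rightarrow> bool" where
  "riemann_domain X p \<longleftrightarrow>
     topspace X \<noteq> {} \<and> Hausdorff_space X \<and> connected_space X \<and>
     (\<forall>x\<in>topspace X. \<exists>U. openin X U \<and> x \<in> U \<and> open (p ` U) \<and>
        homeomorphic_map (subtopology X U) (subtopology euclidean (p ` U)) p)"

definition hol_fun :: "'a topology \<Rightarrow> ('a \<Rightarrow> complex \<times> complex) \<Rightarrow> ('a \<Rightarrow> complex) \<Rightarrow> bool" where
  "hol_fun X p f \<longleftrightarrow>
     (\<forall>x\<in>topspace X. \<exists>U. openin X U \<and> x \<in> U \<and> inj_on p U \<and>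
        holo2 (f \<circ> inv_into U p) (p ` U))"

definition same_germ :: "'a topology \<Rightarrow> ('a \<Rightarrow> complex \<times> complex) \<Rightarrow> ('a \<Rightarrow> complex) \<Rightarrow> 'a \<Rightarrow> 'a \<Rightarrow> bool" where
  "same_germ X p f x y \<longleftrightarrow>
     (\<exists>U V. openin X U \<and> x \<in> U \<and> openin X V \<and> y \<in> V \<and> inj_on p U \<and> inj_on p V \<and>
        p ` U = p ` V \<and> (\<forall>u\<in>U. \<forall>v\<in>V. p u = p v \<longrightarrow> f u = f v))"

definition hol_separable :: "'a topology \<Rightarrow> ('a \<Rightarrow> complex \<times> complex) \<Rightarrow> bool" where
  "hol_separable X p \<longleftrightarrow>
     (\<forall>x\<in>topspace X. \<forall>y\<in>topspace X. x \<noteq> y \<and> p x = p y \<longrightarrow>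
        (\<exists>f. hol_fun X p f \<and> \<not> same_germ X p f x y))"

definition univalent :: "'a topology \<Rightarrow> ('a \<Rightarrow> complex \<times> complex) \<Rightarrow> bool" where
  "univalent X p \<longleftrightarrow> inj_on p (topspace X)"

definition sheeted :: "'a topology \<Rightarrow> ('a \<Rightarrow> complex \<times> complex) \<Rightarrow> enat \<Rightarrow> bool" where
  "sheeted X p \<nu> \<longleftrightarrow>
     (\<forall>z\<in>p ` topspace X.
        (if \<nu> = \<infinity> then infinite {x\<in>topspace X. p x = z}
         else finite {x\<in>topspace X. p x = z} \<and> card {x\<in>topspace X. p x = z} = the_enat \<nu>))"

definition domain_map :: "'a topology \<Rightarrow> ('a \<Rightarrow> complex \<times> complex) \<Rightarrow>
    'b topology \<Rightarrow> ('b \<Rightarrow> complex \<times> complex) \<Rightarrow> ('a \<Rightarrow> 'b) \<Rightarrow> bool" where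
  "domain_map X p Y q \<phi> \<longleftrightarrow> continuous_map X Y \<phi> \<and> (\<forall>x\<in>topspace X. q (\<phi> x) = p x)"

definition extends_all :: "'a topology \<Rightarrow> ('a \<Rightarrow> complex \<times> complex) \<Rightarrow>
    'b topology \<Rightarrow> ('b \<Rightarrow> complex \<times> complex) \<Rightarrow> ('a \<Rightarrow> 'b) \<Rightarrow> bool" where
  "extends_all X p Y q \<phi> \<longleftrightarrow>
     (\<forall>f. hol_fun X p f \<longrightarrow> (\<exists>F. hol_fun Y q F \<and> (\<forall>x\<in>topspace X. F (\<phi> x) = f x)))"

text \<open>Competing
  extensions are taken with points in complex \<times> complex: every domain over C^2 is
  second countable, hence of cardinality at most the continuum, so this loses nothing.\<close>
definition is_envelope :: "'a topology \<Rightarrow> ('a \<Rightarrow> complex \<times> complex) \<Rightarrow>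
    'b topology \<Rightarrow> ('b \<Rightarrow> complex \<times> complex) \<Rightarrow> ('a \<Rightarrow> 'b) \<Rightarrow> bool" where
  "is_envelope X p Y q \<phi> \<longleftrightarrow>
     riemann_domain Y q \<and> domain_map X p Y q \<phi> \<and> extends_all X p Y q \<phi> \<and>
     (\<forall>(Z :: (complex \<times> complex) topology) r \<psi>.
        riemann_domain Z r \<and> domain_map X p Z r \<psi> \<and> extends_all X p Z r \<psi> \<longrightarrow>
        (\<exists>g. domain_map Z r Y q g \<and> (\<forall>x\<in>topspace X. g (\<psi> x) = \<phi> x)))"

definition Anu :: "real \<Rightarrow> ereal \<Rightarrow> enat \<Rightarrow> complex set" where
  "Anu R1 R2 \<nu> =
     (if \<nu> = \<infinity> then {u. ln R1 < Re u \<and> (R2 = \<infinity> \<or> Re u < ln (real_of_ereal R2))}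
      else {u. R1 powr (1 / real (the_enat \<nu>)) < norm u \<and>
               (R2 = \<infinity> \<or> norm u < real_of_ereal R2 powr (1 / real (the_enat \<nu>)))})"

definition pnu :: "enat \<Rightarrow> complex \<Rightarrow> complex" where
  "pnu \<nu> u = (if \<nu> = \<infinity> then exp u else u ^ the_enat \<nu>)"

definition Omega :: "real \<Rightarrow> ereal \<Rightarrow> enat \<Rightarrow> (complex \<times> complex) set" where
  "Omega R1 R2 \<nu> = Anu R1 R2 \<nu> \<times> {y. norm y < R1}"

text \<open>pi(u,y) = p(u) + i y, with p(u), y in R^2.\<close>
definition pinu :: "enat \<Rightarrow> complex \<times> complex \<Rightarrow> complex \<times> complex" where
  "pinu \<nu> uy = (Complex (Re (pnu \<nu> (fst uy))) (Re (snd uy)),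
                Complex (Im (pnu \<nu> (fst uy))) (Im (snd uy)))"

end

theory Submission
  imports Defs "HOL-Complex_Analysis.Complex_Analysis"
begin

text \<open>
  Put w(z1, z2) = z1 + i z2. On \<Omega>, w(pi(u, y)) = p(u) + i y = p(u) (1 + i y / p(u)) with
  |y| < R1 < |p(u)|, so w \<circ> pi has no zeros, and the principal logarithm of the second factor
  gives a holomorphic branch of p\<inverse> \<circ> w \<circ> pi on \<Omega> which separates the points of every fibre
  of pi. Both this branch and 1 / (w \<circ> pi) extend to the envelope. The extended branch still takes
  different values at the images of two points of a fibre, and these images lie over the same point,
  so the envelope is not univalent. If q is the projection of the envelope, the extension F of
  1 / (w \<circ> pi) satisfies F (w \<circ> q) = 1 over the image of \<Omega>, hence everywhere by the identity
  theorem; so w \<circ> q has no zero and (0, 0) is not a value of q.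
\<close>

section \<open>Holomorphic functions of two variables\<close>

definition wcoord :: "complex \<times> complex \<Rightarrow> complex" where
  "wcoord z = fst z + \<i> * snd z"

lemma holo2_subset: "holo2 f U \<Longrightarrow> open V \<Longrightarrow> V \<subseteq> U \<Longrightarrow> holo2 f V"
  unfolding holo2_def by blast

lemma holo2_cong:
  assumes "holo2 f U" "\<And>z. z \<in> U \<Longrightarrow> f z = g z"
  shows "holo2 g U"
  unfolding holo2_def
proof (intro conjI ballI)
  show "open U" using assms(1) by (simp add: holo2_def)
  fix z assume "z \<in> U"
  then obtain a b where "(f has_derivative (\<lambda>h. a * fst h + b * snd h)) (at z)"
    using assms(1) unfolding holo2_def by blast
  then have "(g has_derivative (\<lambda>h. a * fst h + b * snd h)) (at z)"
    using \<open>open U\<close> \<open>z \<in> U\<close> assms(2) by (rule has_derivative_transform_within_open)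
  then show "\<exists>a b. (g has_derivative (\<lambda>h. a * fst h + b * snd h)) (at z)"
    by blast
qed

lemma holo2_mult:
  assumes f: "holo2 f U" and g: "holo2 g U"
  shows "holo2 (\<lambda>z. f z * g z) U"
  unfolding holo2_def
proof (intro conjI ballI)
  show "open U" using f by (simp add: holo2_def)
  fix z assume "z \<in> U"
  then obtain a b c d where
    "(f has_derivative (\<lambda>h. a * fst h + b * snd h)) (at z)"
    "(g has_derivative (\<lambda>h. c * fst h + d * snd h)) (at z)"
    using f g unfolding holo2_def by blast
  then have "((\<lambda>z. f z * g z) has_derivative
      (\<lambda>h. f z * (c * fst h + d * snd h) + (a * fst h + b * snd h) * g z)) (at z)"
    by (rule has_derivative_mult)
  moreover have "(\<lambda>h. f z * (c * fst h + d * snd h) + (a * fst h + b * snd h) * g z) =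
      (\<lambda>h. (f z * c + a * g z) * fst h + (f z * d + b * g z) * snd h)"
    by (auto simp: fun_eq_iff algebra_simps)
  ultimately show "\<exists>a b. ((\<lambda>z. f z * g z) has_derivative (\<lambda>h. a * fst h + b * snd h)) (at z)"
    by auto
qed

lemma holo2_inverse:
  assumes f: "holo2 f U" and nz: "\<And>z. z \<in> U \<Longrightarrow> f z \<noteq> 0"
  shows "holo2 (\<lambda>z. inverse (f z)) U"
  unfolding holo2_def
proof (intro conjI ballI)
  show "open U" using f by (simp add: holo2_def)
  fix z assume z: "z \<in> U"
  then obtain a b where "(f has_derivative (\<lambda>h. a * fst h + b * snd h)) (at z)"
    using f unfolding holo2_def by blast
  then have "((\<lambda>z. inverse (f z)) has_derivative
      (\<lambda>h. - (inverse (f z) * (a * fst h + b * snd h) * inverse (f z)))) (at z)"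
    by (rule Deriv.has_derivative_inverse[of f z, OF nz[OF z]])
  moreover have "(\<lambda>h. - (inverse (f z) * (a * fst h + b * snd h) * inverse (f z))) =
      (\<lambda>h. (- a * inverse (f z) ^ 2) * fst h + (- b * inverse (f z) ^ 2) * snd h)"
    by (auto simp: fun_eq_iff algebra_simps power2_eq_square)
  ultimately have "((\<lambda>z. inverse (f z)) has_derivative
      (\<lambda>h. (- a * inverse (f z) ^ 2) * fst h + (- b * inverse (f z) ^ 2) * snd h)) (at z)"
    by (simp only:)
  then show "\<exists>a b. ((\<lambda>z. inverse (f z)) has_derivative (\<lambda>h. a * fst h + b * snd h)) (at z)"
    by blast
qed

lemma bounded_linear_wcoord: "bounded_linear wcoord"
  unfolding wcoord_def [abs_def] by (intro bounded_linear_intros)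

lemma holo2_wcoord: "open U \<Longrightarrow> holo2 wcoord U"
proof -
  have "(wcoord has_derivative (\<lambda>h. 1 * fst h + \<i> * snd h)) (at z)" for z
    unfolding wcoord_def [abs_def] by (auto intro!: derivative_eq_intros)
  then show "open U \<Longrightarrow> holo2 wcoord U"
    unfolding holo2_def by blast
qed

lemma holo2_inv_into_subset:
  assumes "inj_on q U" "holo2 (H \<circ> inv_into U q) (q ` U)" "V \<subseteq> U" "open (q ` V)"
  shows "holo2 (H \<circ> inv_into V q) (q ` V)"
proof (rule holo2_cong)
  show "holo2 (H \<circ> inv_into U q) (q ` V)"
    using assms by (blast intro: holo2_subset)
  fix w assume w: "w \<in> q ` V"
  then have "inv_into V q w \<in> U" "q (inv_into V q w) = w"
    using assms(3) inv_into_into[OF w] f_inv_into_f[OF w] by auto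
  then show "(H \<circ> inv_into U q) w = (H \<circ> inv_into V q) w"
    using inv_into_f_f[OF assms(1), of "inv_into V q w"] by simp
qed

lemma has_derivative_linear_mult_tendsto:
  fixes G :: "'a::real_normed_vector \<Rightarrow> complex"
  assumes L: "bounded_linear L" and M: "(M \<longlongrightarrow> m) (at z)"
    and eq: "eventually (\<lambda>z'. G z' - G z = L (z' - z) * M z') (at z)"
  shows "(G has_derivative (\<lambda>h. L h * m)) (at z)"
proof -
  obtain C where C: "C > 0" "\<And>h. norm (L h) \<le> norm h * C"
    using bounded_linear.pos_bounded[OF L] by blast
  have ev: "eventually (\<lambda>h. G (z + h) - G z = L h * M (z + h)) (at 0)"
    using eq eventually_at_to_0[of _ z] by (simp add: add.commute)
  have "((\<lambda>h. norm (G (z + h) - G z - L h * m) / norm h) \<longlongrightarrow> 0) (at 0)"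
  proof (rule Lim_null_comparison)
    show "eventually (\<lambda>h. norm (norm (G (z + h) - G z - L h * m) / norm h)
        \<le> C * norm (M (z + h) - m)) (at 0)"
      using ev
    proof eventually_elim
      case (elim h)
      then have "G (z + h) - G z - L h * m = L h * (M (z + h) - m)"
        by (simp add: algebra_simps)
      then have "norm (G (z + h) - G z - L h * m) \<le> norm h * C * norm (M (z + h) - m)"
        using C(2)[of h] by (simp add: norm_mult mult_right_mono)
      then show ?case
        using C(1) by (cases "h = 0") (simp_all add: divide_le_eq mult.commute mult.left_commute)
    qed
    have "((\<lambda>h. M (z + h)) \<longlongrightarrow> m) (at 0)"
      using M by (simp add: LIM_offset_zero)
    then show "((\<lambda>h. C * norm (M (z + h) - m)) \<longlongrightarrow> 0) (at 0)"
      by (intro tendsto_mult_right_zero tendsto_norm_zero) (simp add: LIM_zero)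
  qed
  moreover have "bounded_linear (\<lambda>h. L h * m)"
    using bounded_linear_compose[OF bounded_linear_mult_left L] .
  ultimately show ?thesis
    by (simp add: has_derivative_at)
qed

text \<open>Carath\'eodory's difference quotient g of E at G z gives G z' - G z = L (z' - z) / g (G z')
  near z, and g (G z') tends to e.\<close>
lemma has_derivative_local_solution:
  fixes G :: "'a::real_normed_vector \<Rightarrow> complex"
  assumes L: "bounded_linear L"
    and E: "(E has_field_derivative e) (at (G z))" "e \<noteq> 0"
    and G: "continuous (at z) G"
    and T: "open T" "z \<in> T" "\<And>z'. z' \<in> T \<Longrightarrow> E (G z') = L z'"
  shows "(G has_derivative (\<lambda>h. L h / e)) (at z)"
proof -
  obtain g where g: "\<And>t. E t - E (G z) = g t * (t - G z)" "continuous (at (G z)) g" "g (G z) = e"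
    using E(1) DERIV_caratheodory_within[of E e "G z" UNIV] by auto
  have "isCont (\<lambda>z'. g (G z')) z"
    using continuous_at_compose[OF G g(2)] by (simp add: o_def)
  then have K: "((\<lambda>z'. g (G z')) \<longlongrightarrow> e) (at z)"
    using g(3) by (simp add: isCont_def)
  have "eventually (\<lambda>z'. z' \<in> T) (at z)"
    using T(1,2) eventually_at_topological by blast
  moreover have "eventually (\<lambda>z'. g (G z') \<noteq> 0) (at z)"
    using tendsto_imp_eventually_ne[OF K E(2)] .
  ultimately have eq: "eventually (\<lambda>z'. G z' - G z = L (z' - z) * (1 / g (G z'))) (at z)"
  proof eventually_elim
    case (elim z')
    have "L (z' - z) = E (G z') - E (G z)"
      using T(3)[OF elim(1)] T(3)[OF T(2)] linear_diff[OF bounded_linear.linear[OF L]] by simp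
    also have "\<dots> = g (G z') * (G z' - G z)"
      by (rule g(1))
    finally show ?case
      using elim(2) by (simp add: field_simps)
  qed
  have "((\<lambda>z'. 1 / g (G z')) \<longlongrightarrow> 1 / e) (at z)"
    by (rule tendsto_divide[OF tendsto_const K E(2)])
  then have "(G has_derivative (\<lambda>h. L h * (1 / e))) (at z)"
    using eq by (rule has_derivative_linear_mult_tendsto[OF L])
  then show ?thesis
    by simp
qed

lemma holo2_local_solution:
  assumes T: "open T" and G: "continuous_on T G"
    and solves: "\<And>z. z \<in> T \<Longrightarrow> E (G z) = wcoord z"
    and E: "\<And>z. z \<in> T \<Longrightarrow> \<exists>e. e \<noteq> 0 \<and> (E has_field_derivative e) (at (G z))"
  shows "holo2 G T"
  unfolding holo2_def
proof (intro conjI ballI)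
  show "open T"
    by (rule T)
  fix z assume z: "z \<in> T"
  then obtain e where e: "e \<noteq> 0" "(E has_field_derivative e) (at (G z))"
    using E by blast
  have "isCont G z"
    using G T z continuous_on_eq_continuous_at by blast
  then have "(G has_derivative (\<lambda>h. wcoord h / e)) (at z)"
    by (rule has_derivative_local_solution[OF bounded_linear_wcoord e(2,1) _ T z solves])
  moreover have "(\<lambda>h. wcoord h / e) = (\<lambda>h. (1 / e) * fst h + (\<i> / e) * snd h)"
    by (simp add: fun_eq_iff wcoord_def add_divide_distrib)
  ultimately have "(G has_derivative (\<lambda>h. (1 / e) * fst h + (\<i> / e) * snd h)) (at z)"
    by (simp only:)
  then show "\<exists>a b. (G has_derivative (\<lambda>h. a * fst h + b * snd h)) (at z)"
    by blast
qed

section \<open>Identity theorem on domains over \<open>\<complex>\<^sup>2\<close>\<close>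

lemma continuous_map_riemann_domain:
  assumes "riemann_domain Y q"
  shows "continuous_map Y euclidean q"
  unfolding continuous_map_def
proof (intro conjI allI impI)
  show "q \<in> topspace Y \<rightarrow> topspace euclidean" by simp
  fix B :: "(complex \<times> complex) set" assume "openin euclidean B"
  show "openin Y {y \<in> topspace Y. q y \<in> B}"
  proof (subst openin_subopen, intro ballI)
    fix y assume y: "y \<in> {y \<in> topspace Y. q y \<in> B}"
    then obtain U where U: "openin Y U" "y \<in> U"
        "homeomorphic_map (subtopology Y U) (top_of_set (q ` U)) q"
      using assms unfolding riemann_domain_def by blast
    have "continuous_map (subtopology Y U) euclidean q"
      using homeomorphic_imp_continuous_map[OF U(3)] continuous_map_in_subtopology by blast
    then have "openin (subtopology Y U) {v \<in> topspace (subtopology Y U). q v \<in> B}"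
      using \<open>openin euclidean B\<close> by (rule openin_continuous_map_preimage)
    moreover have "{v \<in> topspace (subtopology Y U). q v \<in> B} = {v \<in> U. q v \<in> B}"
      using openin_subset[OF U(1)] by auto
    ultimately have "openin Y {v \<in> U. q v \<in> B}"
      using openin_trans_full[OF _ U(1)] by simp
    then show "\<exists>T. openin Y T \<and> y \<in> T \<and> T \<subseteq> {y \<in> topspace Y. q y \<in> B}"
      using y U(2) openin_subset[OF U(1)] by blast
  qed
qed

lemma riemann_domain_open_image:
  assumes "riemann_domain Y q" "openin Y W"
  shows "open (q ` W)"
proof (subst open_subopen, intro ballI)
  fix z assume "z \<in> q ` W"
  then obtain y where y: "y \<in> W" "z = q y" by blast
  then obtain U where U: "openin Y U" "y \<in> U" "open (q ` U)"
      "homeomorphic_map (subtopology Y U) (top_of_set (q ` U)) q"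
    using assms openin_subset[OF assms(2)] unfolding riemann_domain_def by blast
  have "openin (subtopology Y U) (W \<inter> U)"
    using assms(2) by (rule openin_subtopology_Int)
  then have "openin (top_of_set (q ` U)) (q ` (W \<inter> U))"
    using homeomorphic_imp_open_map[OF U(4)] unfolding open_map_def by blast
  then have "open (q ` (W \<inter> U))"
    using U(3) openin_open_trans by blast
  then show "\<exists>T. open T \<and> z \<in> T \<and> T \<subseteq> q ` W"
    using y U(2) by blast
qed

lemma hol_fun_ball_chart:
  assumes Y: "riemann_domain Y q" and H: "hol_fun Y q H" and y: "y \<in> topspace Y"
  obtains V c r where "openin Y V" "y \<in> V" "inj_on q V" "q ` V = ball c r"
    "holo2 (H \<circ> inv_into V q) (ball c r)"
proof -
  obtain U where U: "openin Y U" "y \<in> U" "inj_on q U" "holo2 (H \<circ> inv_into U q) (q ` U)"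
    using H y unfolding hol_fun_def by blast
  obtain r where r: "r > 0" "ball (q y) r \<subseteq> q ` U"
    using U(2,4) openE unfolding holo2_def by blast
  define V where "V = {v \<in> U. q v \<in> ball (q y) r}"
  have "openin Y {v \<in> topspace Y. q v \<in> ball (q y) r}"
    by (intro openin_continuous_map_preimage[OF continuous_map_riemann_domain[OF Y]]) auto
  moreover have "V = U \<inter> {v \<in> topspace Y. q v \<in> ball (q y) r}"
    using openin_subset[OF U(1)] by (auto simp: V_def)
  ultimately have "openin Y V"
    using U(1) by (simp add: openin_Int)
  moreover have "q ` V = ball (q y) r"
  proof
    show "q ` V \<subseteq> ball (q y) r" by (auto simp: V_def)
    show "ball (q y) r \<subseteq> q ` V"
    proof
      fix w assume w: "w \<in> ball (q y) r"
      then obtain u where "u \<in> U" "w = q u"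
        using r(2) by blast
      then show "w \<in> q ` V"
        using w by (auto simp: V_def)
    qed
  qed
  moreover have "V \<subseteq> U" "y \<in> V"
    using U(2) r(1) by (auto simp: V_def)
  moreover have "holo2 (H \<circ> inv_into V q) (q ` V)"
    using holo2_inv_into_subset[OF U(3,4) \<open>V \<subseteq> U\<close>] \<open>q ` V = ball (q y) r\<close> by simp
  ultimately show ?thesis
    using that[of V "q y" r] inj_on_subset[OF U(3)] by simp
qed

lemma holomorphic_on_holo2_line:
  fixes \<Phi> :: "complex \<times> complex \<Rightarrow> complex"
  assumes "holo2 \<Phi> U"
  shows "(\<lambda>t. \<Phi> (w + (t * fst d, t * snd d))) holomorphic_on {t. w + (t * fst d, t * snd d) \<in> U}"
  unfolding holomorphic_on_def
proof
  define Lin where "Lin = (\<lambda>t::complex. (t * fst d, t * snd d))"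
  have "linear Lin"
    unfolding Lin_def by (rule linearI) (simp_all add: algebra_simps scaleR_conv_of_real)
  then have dL: "((\<lambda>t. w + Lin t) has_derivative Lin) (at t)" for t
    using has_derivative_add[OF has_derivative_const[of w] linear_imp_has_derivative] by simp
  fix t assume "t \<in> {t. w + (t * fst d, t * snd d) \<in> U}"
  then obtain a b where "(\<Phi> has_derivative (\<lambda>h. a * fst h + b * snd h)) (at (w + Lin t))"
    using assms unfolding holo2_def Lin_def by blast
  then have "((\<lambda>t. \<Phi> (w + Lin t)) has_derivative (\<lambda>s. a * fst (Lin s) + b * snd (Lin s))) (at t)"
    using has_derivative_compose[OF dL] by blast
  moreover have "(\<lambda>s. a * fst (Lin s) + b * snd (Lin s)) = (*) (a * fst d + b * snd d)"
    by (auto simp: Lin_def fun_eq_iff algebra_simps)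
  ultimately have "((\<lambda>t. \<Phi> (w + Lin t)) has_field_derivative (a * fst d + b * snd d)) (at t)"
    by (simp add: has_field_derivative_def)
  then show "(\<lambda>t. \<Phi> (w + (t * fst d, t * snd d))) field_differentiable (at t within {t. w + (t * fst d, t * snd d) \<in> U})"
    unfolding Lin_def using field_differentiable_at_within field_differentiable_def by blast
qed

text \<open>On the complex line t \<mapsto> w0 + t (z - w0), which meets the ball in a convex set, the
  one-variable identity theorem applies.\<close>
lemma holo2_ball_const:
  fixes \<Phi> :: "complex \<times> complex \<Rightarrow> complex"
  assumes \<Phi>: "holo2 \<Phi> (ball c r)"
    and W: "open W" "W \<subseteq> ball c r" "w0 \<in> W" "\<And>w. w \<in> W \<Longrightarrow> \<Phi> w = k"
    and z: "z \<in> ball c r"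
  shows "\<Phi> z = k"
proof -
  define d where "d = z - w0"
  define L where "L = (\<lambda>t::complex. w0 + (t * fst d, t * snd d))"
  define S where "S = {t. L t \<in> ball c r}"
  have "linear (\<lambda>t::complex. (t * fst d, t * snd d))"
    by (rule linearI) (simp_all add: algebra_simps scaleR_conv_of_real)
  moreover have "S = (\<lambda>t. (t * fst d, t * snd d)) -` ball (c - w0) r"
    by (simp add: S_def L_def dist_norm diff_diff_eq vimage_def)
  ultimately have "connected S"
    by (simp add: convex_connected convex_linear_vimage)
  have contL: "continuous_on UNIV L"
    unfolding L_def by (intro continuous_intros)
  have "open S"
    unfolding S_def using open_vimage[OF open_ball contL] by (simp add: vimage_def)
  have "L 0 = w0" "L 1 = z"
    by (simp_all add: L_def d_def zero_prod_def prod_eq_iff)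
  then have "0 \<in> S \<inter> L -` W" "1 \<in> S"
    using W(2,3) z by (auto simp: S_def)
  have "\<Phi> (L 1) = k"
  proof (rule analytic_continuation_open[where s="S \<inter> L -` W" and s'=S and f="\<lambda>t. \<Phi> (L t)"
        and g="\<lambda>_. k" and z=1])
    show "open (S \<inter> L -` W)"
      using \<open>open S\<close> open_vimage[OF W(1) contL] by blast
    show "(\<lambda>t. \<Phi> (L t)) holomorphic_on S"
      unfolding S_def L_def by (rule holomorphic_on_holo2_line[OF \<Phi>])
  qed (use \<open>open S\<close> \<open>connected S\<close> \<open>0 \<in> S \<inter> L -` W\<close> \<open>1 \<in> S\<close> W(4) in auto)
  then show ?thesis
    using \<open>L 1 = z\<close> by simp
qed

lemma hol_fun_const_on_ball_chart:
  assumes Y: "riemann_domain Y q"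
    and V: "openin Y V" "inj_on q V" "q ` V = ball c r" "holo2 (H \<circ> inv_into V q) (ball c r)"
    and N: "openin Y N" "v \<in> N \<inter> V" "\<And>w. w \<in> N \<Longrightarrow> H w = k"
    and w: "w \<in> V"
  shows "H w = k"
proof -
  have "open (q ` (N \<inter> V))"
    using riemann_domain_open_image[OF Y openin_Int[OF N(1) V(1)]] .
  moreover have "q ` (N \<inter> V) \<subseteq> ball c r" "q v \<in> q ` (N \<inter> V)"
    using N(2) V(3) by blast+
  moreover have "(H \<circ> inv_into V q) w' = k" if "w' \<in> q ` (N \<inter> V)" for w'
    using that N(3) inv_into_f_f[OF V(2)] by auto
  moreover have "q w \<in> ball c r"
    using V(3) w by blast
  ultimately have "(H \<circ> inv_into V q) (q w) = k"
    by (rule holo2_ball_const[OF V(4)])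
  then show "H w = k"
    using inv_into_f_f[OF V(2) w] by simp
qed

lemma hol_fun_identity:
  assumes Y: "riemann_domain Y q" and H: "hol_fun Y q H"
    and W: "openin Y W" "W \<noteq> {}" "\<And>y. y \<in> W \<Longrightarrow> H y = k"
  shows "\<forall>y\<in>topspace Y. H y = k"
proof -
  define S where "S = {y \<in> topspace Y. \<exists>N. openin Y N \<and> y \<in> N \<and> (\<forall>w\<in>N. H w = k)}"
  have "openin Y S"
  proof (subst openin_subopen, intro ballI)
    fix y assume "y \<in> S"
    then obtain N where N: "openin Y N" "y \<in> N" "\<forall>w\<in>N. H w = k"
      by (auto simp: S_def)
    then have "N \<subseteq> S"
      unfolding S_def using openin_subset[OF N(1)] by blast
    then show "\<exists>T. openin Y T \<and> y \<in> T \<and> T \<subseteq> S"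
      using N(1,2) by blast
  qed
  moreover have "openin Y (topspace Y - S)"
  proof (subst openin_subopen, intro ballI)
    fix y assume y: "y \<in> topspace Y - S"
    then obtain V c r where V: "openin Y V" "y \<in> V" "inj_on q V" "q ` V = ball c r"
        "holo2 (H \<circ> inv_into V q) (ball c r)"
      using hol_fun_ball_chart[OF Y H] by blast
    have "V \<inter> S = {}"
    proof (rule ccontr)
      assume "V \<inter> S \<noteq> {}"
      then obtain v N where "openin Y N" "v \<in> N \<inter> V" "\<And>w. w \<in> N \<Longrightarrow> H w = k"
        by (auto simp: S_def)
      then have "\<forall>w\<in>V. H w = k"
        using hol_fun_const_on_ball_chart[OF Y V(1,3,4,5)] by blast
      then show False
        using y V(1,2) unfolding S_def by blast
    qed
    then show "\<exists>T. openin Y T \<and> y \<in> T \<and> T \<subseteq> topspace Y - S"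
      using V(1,2) openin_subset[OF V(1)] by blast
  qed
  moreover have "S \<noteq> {}"
    using W openin_subset[OF W(1)] by (auto simp: S_def)
  moreover have "connected_space Y"
    using Y by (simp add: riemann_domain_def)
  ultimately have "S = topspace Y"
    unfolding connected_space_clopen_in closedin_def by (auto simp: S_def)
  then show ?thesis
    by (auto simp: S_def)
qed

section \<open>Extensions of domains\<close>

lemma riemann_domain_inj_chart:
  assumes "riemann_domain Y q" "y \<in> topspace Y"
  obtains U where "openin Y U" "y \<in> U" "inj_on q U"
proof -
  obtain U where U: "openin Y U" "y \<in> U" "homeomorphic_map (subtopology Y U) (top_of_set (q ` U)) q"
    using assms unfolding riemann_domain_def by blast
  have "inj_on q (topspace (subtopology Y U))"
    using homeomorphic_imp_injective_map[OF U(3)] .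
  then show ?thesis
    using that U(1,2) openin_subset[OF U(1)] by (simp add: Int_absorb1)
qed

text \<open>The points of Y over a small open set p ` N around a point of the image of \<phi> all lie in
  the image of \<phi>, so a holomorphic function constant on that image is constant on an open set.\<close>
lemma domain_map_identity:
  assumes X: "riemann_domain X p" and Y: "riemann_domain Y q"
    and \<phi>: "domain_map X p Y q \<phi>" and H: "hol_fun Y q H"
    and k: "\<And>x. x \<in> topspace X \<Longrightarrow> H (\<phi> x) = k"
  shows "\<forall>y\<in>topspace Y. H y = k"
proof -
  have cont: "continuous_map X Y \<phi>" and over: "\<And>x. x \<in> topspace X \<Longrightarrow> q (\<phi> x) = p x"
    using \<phi> by (auto simp: domain_map_def)
  obtain x0 where x0: "x0 \<in> topspace X"
    using X unfolding riemann_domain_def by blast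
  then have "\<phi> x0 \<in> topspace Y"
    using continuous_map_image_subset_topspace[OF cont] by blast
  then obtain V where V: "openin Y V" "\<phi> x0 \<in> V" "inj_on q V"
    using riemann_domain_inj_chart[OF Y] by blast
  define N where "N = {x \<in> topspace X. \<phi> x \<in> V}"
  have "open (p ` N)"
    unfolding N_def
    using riemann_domain_open_image[OF X openin_continuous_map_preimage[OF cont V(1)]] .
  define W where "W = {v \<in> topspace Y. q v \<in> p ` N} \<inter> V"
  have "openin Y W"
    unfolding W_def using continuous_map_riemann_domain[OF Y] \<open>open (p ` N)\<close> V(1)
    by (intro openin_Int openin_continuous_map_preimage) auto
  moreover have "W \<noteq> {}"
    using x0 V(2) \<open>\<phi> x0 \<in> topspace Y\<close> over[OF x0] by (auto simp: W_def N_def)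
  moreover have "H v = k" if "v \<in> W" for v
  proof -
    obtain x where x: "x \<in> topspace X" "\<phi> x \<in> V" "q v = p x" "v \<in> V"
      using \<open>v \<in> W\<close> by (auto simp: W_def N_def)
    then have "\<phi> x = v"
      by (intro inj_onD[OF V(3) _ x(2) x(4)]) (simp add: over[OF x(1)])
    then show "H v = k"
      using k[OF x(1)] by simp
  qed
  ultimately show ?thesis
    by (rule hol_fun_identity[OF Y H])
qed

lemma hol_fun_mult_holo2:
  assumes F: "hol_fun Y q F" and G: "holo2 G UNIV"
  shows "hol_fun Y q (\<lambda>y. F y * G (q y))"
  unfolding hol_fun_def
proof
  fix y assume "y \<in> topspace Y"
  then obtain U where U: "openin Y U" "y \<in> U" "inj_on q U" "holo2 (F \<circ> inv_into U q) (q ` U)"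
    using F unfolding hol_fun_def by blast
  have "open (q ` U)"
    using U(4) by (simp add: holo2_def)
  then have "holo2 (\<lambda>z. (F \<circ> inv_into U q) z * G z) (q ` U)"
    using holo2_mult[OF U(4) holo2_subset[OF G _ subset_UNIV]] by blast
  then have "holo2 ((\<lambda>y. F y * G (q y)) \<circ> inv_into U q) (q ` U)"
    by (rule holo2_cong) (simp add: f_inv_into_f)
  then show "\<exists>U. openin Y U \<and> y \<in> U \<and> inj_on q U \<and> holo2 ((\<lambda>y. F y * G (q y)) \<circ> inv_into U q) (q ` U)"
    using U(1-3) by blast
qed

lemma extension_not_univalent:
  assumes \<phi>: "domain_map X p Y q \<phi>" "extends_all X p Y q \<phi>"
    and f: "hol_fun X p f"
    and x: "x \<in> topspace X" "x' \<in> topspace X" "p x = p x'" "f x \<noteq> f x'"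
  shows "\<not> univalent Y q"
proof
  assume "univalent Y q"
  obtain F where F: "\<And>x. x \<in> topspace X \<Longrightarrow> F (\<phi> x) = f x"
    using \<phi>(2) f unfolding extends_all_def by blast
  have "\<phi> x \<in> topspace Y" "\<phi> x' \<in> topspace Y" "q (\<phi> x) = q (\<phi> x')"
    using \<phi>(1) x(1-3) continuous_map_image_subset_topspace
    unfolding domain_map_def by fastforce+
  then have "\<phi> x = \<phi> x'"
    using \<open>univalent Y q\<close> unfolding univalent_def by (blast dest: inj_onD)
  then show False
    using F x by metis
qed

lemma extension_nonvanishing:
  assumes X: "riemann_domain X p" and Y: "riemann_domain Y q"
    and \<phi>: "domain_map X p Y q \<phi>" "extends_all X p Y q \<phi>"
    and G: "holo2 G UNIV" and g: "hol_fun X p g" "\<And>x. x \<in> topspace X \<Longrightarrow> g x * G (p x) = 1"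
    and y: "y \<in> topspace Y"
  shows "G (q y) \<noteq> 0"
proof -
  obtain F where F: "hol_fun Y q F" "\<And>x. x \<in> topspace X \<Longrightarrow> F (\<phi> x) = g x"
    using \<phi>(2) g(1) unfolding extends_all_def by blast
  have "F (\<phi> x) * G (q (\<phi> x)) = 1" if "x \<in> topspace X" for x
    using that F(2) g(2) \<phi>(1) by (simp add: domain_map_def)
  then have "F y * G (q y) = 1"
    using domain_map_identity[OF X Y \<phi>(1) hol_fun_mult_holo2[OF F(1) G]] y by blast
  then show ?thesis by auto
qed

lemma hol_separableI:
  assumes "hol_fun X p f"
    and "\<And>x y. x \<in> topspace X \<Longrightarrow> y \<in> topspace X \<Longrightarrow> p x = p y \<Longrightarrow> f x = f y \<Longrightarrow> x = y"
  shows "hol_separable X p"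
  using assms unfolding hol_separable_def same_germ_def by blast

lemma homeomorphism_inj_chart:
  fixes p :: "'a::euclidean_space \<Rightarrow> 'a"
  assumes "open U" "continuous_on U p" "inj_on p U"
  shows "open (p ` U)" "homeomorphism U (p ` U) p (inv_into U p)"
  using assms by (auto intro: invariance_of_domain_gen simp: continuous_on_inverse_open homeomorphism_def)

lemma riemann_domain_top_of_set:
  fixes p :: "complex \<times> complex \<Rightarrow> complex \<times> complex"
  assumes S: "open S" "connected S" "S \<noteq> {}" and p: "continuous_on S p"
    and charts: "\<And>x. x \<in> S \<Longrightarrow> \<exists>U. open U \<and> x \<in> U \<and> U \<subseteq> S \<and> inj_on p U"
  shows "riemann_domain (top_of_set S) p"
  unfolding riemann_domain_def
proof (intro conjI ballI)
  show "topspace (top_of_set S) \<noteq> {}" "Hausdorff_space (top_of_set S)"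
    using S(3) by (simp_all add: Hausdorff_space_subtopology)
  show "connected_space (top_of_set S)"
    using S(2) connected_space_subtopology connectedin_iff_connected by blast
  fix x assume "x \<in> topspace (top_of_set S)"
  then have "x \<in> S" by simp
  then obtain U where U: "open U" "x \<in> U" "U \<subseteq> S" "inj_on p U"
    using charts by blast
  have "continuous_on U p"
    using p U(3) by (rule continuous_on_subset)
  note chart = homeomorphism_inj_chart[OF U(1) this U(4)]
  have "homeomorphic_map (top_of_set U) (top_of_set (p ` U)) p"
    using chart(2) unfolding homeomorphic_map_maps homeomorphic_maps_def homeomorphism_def
    by (intro exI[of _ "inv_into U p"]) (auto simp: continuous_map_subtopology_eu)
  moreover have "subtopology (top_of_set S) U = top_of_set U"
    using U(3) by (simp add: subtopology_subtopology Int_absorb1)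
  moreover have "openin (top_of_set S) U"
    using U(1,3) by (simp add: open_subset)
  ultimately show "\<exists>U. openin (top_of_set S) U \<and> x \<in> U \<and> open (p ` U) \<and>
      homeomorphic_map (subtopology (top_of_set S) U) (top_of_set (p ` U)) p"
    using U(2) chart(1) by metis
qed

lemma hol_fun_top_of_setI:
  assumes "\<And>x. x \<in> S \<Longrightarrow> \<exists>U. open U \<and> x \<in> U \<and> U \<subseteq> S \<and> inj_on p U"
    and "\<And>U. open U \<Longrightarrow> U \<subseteq> S \<Longrightarrow> inj_on p U \<Longrightarrow> holo2 (f \<circ> inv_into U p) (p ` U)"
  shows "hol_fun (top_of_set S) p f"
  unfolding hol_fun_def
proof
  fix x assume "x \<in> topspace (top_of_set S)"
  then obtain U where U: "open U" "x \<in> U" "U \<subseteq> S" "inj_on p U"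
    using assms(1) by auto
  then show "\<exists>U. openin (top_of_set S) U \<and> x \<in> U \<and> inj_on p U \<and> holo2 (f \<circ> inv_into U p) (p ` U)"
    using assms(2)[OF U(1,3,4)] by (intro exI[of _ U]) (simp add: open_subset)
qed

section \<open>The domains \<open>\<Omega>\<close>\<close>

lemma enat_ge_2_cases:
  assumes "2 \<le> \<nu>"
  obtains "\<nu> = \<infinity>" | n where "\<nu> = enat n" "n \<ge> 2"
  using assms by (cases \<nu>) (auto simp: numeral_eq_enat)

lemma pinu_eq_iff: "pinu \<nu> a = pinu \<nu> b \<longleftrightarrow> pnu \<nu> (fst a) = pnu \<nu> (fst b) \<and> snd a = snd b"
  by (auto simp: pinu_def complex_eq_iff)

lemma wcoord_pinu: "wcoord (pinu \<nu> x) = pnu \<nu> (fst x) + \<i> * snd x"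
  by (simp add: wcoord_def pinu_def complex_eq_iff)

lemma continuous_on_pnu: "continuous_on S (pnu \<nu>)"
  by (cases "\<nu> = \<infinity>") (auto simp: pnu_def [abs_def] intro!: continuous_intros)

lemma continuous_on_pinu: "continuous_on S (pinu \<nu>)"
proof -
  have "pinu \<nu> = (\<lambda>x. (of_real (Re (pnu \<nu> (fst x))) + \<i> * of_real (Re (snd x)),
      of_real (Im (pnu \<nu> (fst x))) + \<i> * of_real (Im (snd x))))"
    by (auto simp: pinu_def fun_eq_iff Complex_eq)
  moreover have "continuous_on S (\<lambda>x. pnu \<nu> (fst x))"
    using continuous_on_compose2[OF continuous_on_pnu continuous_on_fst[OF continuous_on_id]] by blast
  ultimately show ?thesis
    by (simp, intro continuous_intros)
qed

lemma norm_pnu_gt: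
  assumes "0 < R1" "2 \<le> \<nu>" "u \<in> Anu R1 R2 \<nu>"
  shows "R1 < norm (pnu \<nu> u)"
  using assms(2)
proof (cases rule: enat_ge_2_cases)
  case 1
  then have "exp (ln R1) < exp (Re u)"
    using assms(3) by (simp add: Anu_def)
  then show ?thesis
    using 1 assms(1) by (simp add: pnu_def)
next
  case (2 n)
  then have "(R1 powr (1 / real n)) ^ n < norm u ^ n"
    using assms(3) by (intro power_strict_mono) (auto simp: Anu_def)
  then show ?thesis
    using 2 assms(1) by (simp add: pnu_def norm_power powr_inverse_root)
qed

lemma Anu_pnu_fibre:
  assumes "u \<in> Anu R1 R2 \<nu>" "2 \<le> \<nu>" "pnu \<nu> v = pnu \<nu> u"
  shows "v \<in> Anu R1 R2 \<nu>"
  using assms(2)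
proof (cases rule: enat_ge_2_cases)
  case 1
  then have "norm (exp v) = norm (exp u)"
    using assms(3) by (simp add: pnu_def)
  then show ?thesis
    using assms(1) 1 by (simp add: Anu_def)
next
  case (2 n)
  then have "norm v ^ n = norm u ^ n"
    using assms(3) by (metis pnu_def enat.distinct(2) the_enat.simps norm_power)
  then have "norm v = norm u"
    using 2 power_eq_imp_eq_base[of "norm v" n "norm u"] by simp
  then show ?thesis
    using assms(1) 2 by (simp add: Anu_def)
qed

lemma open_Omega: "open (Omega R1 R2 \<nu>)"
proof -
  have "open {u::complex. a < Re u}" "open {u::complex. Re u < a}"
       "open {u::complex. a < norm u}" "open {u::complex. norm u < a}" for a
    by (auto intro!: open_Collect_less continuous_intros)
  then have "open (Anu R1 R2 \<nu>)"
    unfolding Anu_def by (cases "R2 = \<infinity>"; cases "\<nu> = \<infinity>") (simp_all add: Collect_conj_eq open_Int)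
  moreover have "{y::complex. norm y < R1} = ball 0 R1" by auto
  ultimately show ?thesis by (simp add: Omega_def open_Times)
qed

lemma connected_Anu:
  assumes "2 \<le> \<nu>"
  shows "connected (Anu R1 R2 \<nu>)"
  using assms
proof (cases rule: enat_ge_2_cases)
  case 1
  have "convex {u::complex. a < Re u}" "convex {u::complex. Re u < a}" for a
    by (simp_all add: convex_halfspace_Re_gt convex_halfspace_Re_lt)
  then have "convex (Anu R1 R2 \<nu>)"
    unfolding Anu_def using 1 by (cases "R2 = \<infinity>") (simp_all add: Collect_conj_eq convex_Int)
  then show ?thesis
    by (rule convex_connected)
next
  case (2 n)
  show ?thesis
  proof (cases "R2 = \<infinity>")
    case True
    have "connected (- cball (0::complex) (R1 powr (1 / real n)))"
      by (rule connected_complement_bounded_convex) auto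
    moreover have "Anu R1 R2 \<nu> = - cball 0 (R1 powr (1 / real n))"
      using 2 True by (auto simp: Anu_def)
    ultimately show ?thesis
      by simp
  next
    case False
    have "Anu R1 R2 \<nu> = {x. R1 powr (1 / real n) < norm (x - 0) \<and>
        norm (x - 0) < real_of_ereal R2 powr (1 / real n)}"
      using 2 False by (auto simp: Anu_def)
    then show ?thesis
      using connected_annulus(1)[where 'N=complex,
          of "R1 powr (1 / real n)" 0 "real_of_ereal R2 powr (1 / real n)"]
      by simp
  qed
qed

lemma connected_Omega:
  assumes "2 \<le> \<nu>"
  shows "connected (Omega R1 R2 \<nu>)"
proof -
  have "{y::complex. norm y < R1} = ball 0 R1"
    by auto
  then show ?thesis
    unfolding Omega_def using connected_Anu[OF assms] by (simp add: connected_Times)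
qed

lemma Anu_nonempty:
  assumes "0 < R1" "ereal R1 < R2" "2 \<le> \<nu>"
  shows "Anu R1 R2 \<nu> \<noteq> {}"
proof (cases R2)
  case (real r2)
  with assms(1,2) have r2: "R1 < r2"
    by simp
  show ?thesis
    using assms(3)
  proof (cases rule: enat_ge_2_cases)
    case 1
    then have "complex_of_real ((ln R1 + ln r2) / 2) \<in> Anu R1 R2 \<nu>"
      using real r2 assms(1) by (simp add: Anu_def)
    then show ?thesis
      by blast
  next
    case (2 n)
    have "R1 powr (1 / real n) < r2 powr (1 / real n)"
      using r2 assms(1) 2 by (intro powr_less_mono2) auto
    then obtain m where m: "R1 powr (1 / real n) < m" "m < r2 powr (1 / real n)"
      using dense by blast
    moreover have "0 < m"
      using m(1) powr_ge_zero[of R1 "1 / real n"] by linarith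
    ultimately have "complex_of_real m \<in> Anu R1 R2 \<nu>"
      using real 2 by (simp add: Anu_def)
    then show ?thesis
      by blast
  qed
next
  case PInf
  then have "complex_of_real (if \<nu> = \<infinity> then ln R1 + 1 else R1 powr (1 / real (the_enat \<nu>)) + 1)
      \<in> Anu R1 R2 \<nu>"
    by (simp add: Anu_def)
  then show ?thesis
    by blast
qed (use assms in simp)

lemma Omega_nonempty:
  assumes "0 < R1" "ereal R1 < R2" "2 \<le> \<nu>"
  shows "Omega R1 R2 \<nu> \<noteq> {}"
proof -
  obtain u where "u \<in> Anu R1 R2 \<nu>"
    using Anu_nonempty[OF assms] by blast
  then have "(u, 0) \<in> Omega R1 R2 \<nu>"
    using assms(1) by (simp add: Omega_def)
  then show ?thesis
    by blast
qed

lemma pnu_locally_injective: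
  assumes "2 \<le> \<nu>" "\<nu> = \<infinity> \<or> u \<noteq> 0"
  obtains r where "r > 0" "inj_on (pnu \<nu>) (ball u r)"
proof -
  have "pnu \<nu> holomorphic_on UNIV"
    by (cases "\<nu> = \<infinity>") (auto simp: pnu_def [abs_def] intro!: holomorphic_intros)
  moreover have "deriv (pnu \<nu>) u \<noteq> 0"
    using assms(1)
  proof (cases rule: enat_ge_2_cases)
    case 1
    then show ?thesis
      using DERIV_imp_deriv[OF DERIV_exp[of u]] by (simp add: pnu_def [abs_def])
  next
    case (2 n)
    have "deriv (\<lambda>u. u ^ n) u = of_nat n * u ^ (n - 1)"
      by (rule DERIV_imp_deriv) (auto intro!: derivative_eq_intros)
    then show ?thesis
      using 2 assms(2) by (simp add: pnu_def [abs_def])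
  qed
  ultimately show ?thesis
    using has_complex_derivative_locally_injective[of "pnu \<nu>" UNIV u] that by auto
qed

lemma Anu_nonzero:
  assumes "0 < R1" "2 \<le> \<nu>" "u \<in> Anu R1 R2 \<nu>"
  shows "\<nu> = \<infinity> \<or> u \<noteq> 0"
  using assms(2) norm_pnu_gt[OF assms] assms(1) by (cases rule: enat_ge_2_cases) (auto simp: pnu_def power_0_left)

lemma pinu_locally_injective:
  assumes "0 < R1" "2 \<le> \<nu>" "x \<in> Omega R1 R2 \<nu>"
  shows "\<exists>U. open U \<and> x \<in> U \<and> U \<subseteq> Omega R1 R2 \<nu> \<and> inj_on (pinu \<nu>) U"
proof -
  have "fst x \<in> Anu R1 R2 \<nu>"
    using assms(3) by (auto simp: Omega_def mem_Times_iff)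
  then obtain r where r: "r > 0" "inj_on (pnu \<nu>) (ball (fst x) r)"
    using pnu_locally_injective[OF assms(2) Anu_nonzero[OF assms(1,2)]] by blast
  define U where "U = (ball (fst x) r \<times> UNIV) \<inter> Omega R1 R2 \<nu>"
  have "inj_on (pinu \<nu>) U"
  proof (rule inj_onI)
    fix a b assume "a \<in> U" "b \<in> U" "pinu \<nu> a = pinu \<nu> b"
    then have "pnu \<nu> (fst a) = pnu \<nu> (fst b)" "snd a = snd b"
        "fst a \<in> ball (fst x) r" "fst b \<in> ball (fst x) r"
      by (auto simp: U_def pinu_eq_iff mem_Times_iff)
    then show "a = b"
      using r(2) by (auto simp: prod_eq_iff dest: inj_onD)
  qed
  moreover have "open U"
    unfolding U_def by (intro open_Int open_Times open_Omega) auto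
  ultimately show ?thesis
    using r(1) assms(3) by (intro exI[of _ U]) (auto simp: U_def mem_Times_iff)
qed

lemma riemann_domain_Omega:
  assumes "0 < R1" "ereal R1 < R2" "2 \<le> \<nu>"
  shows "riemann_domain (top_of_set (Omega R1 R2 \<nu>)) (pinu \<nu>)"
  using open_Omega connected_Omega[OF assms(3)] Omega_nonempty[OF assms] continuous_on_pinu
    pinu_locally_injective[OF assms(1,3)]
  by (rule riemann_domain_top_of_set)

lemma pinu_fibre_Omega:
  assumes "2 \<le> \<nu>" "x \<in> Omega R1 R2 \<nu>"
  shows "{x' \<in> Omega R1 R2 \<nu>. pinu \<nu> x' = pinu \<nu> x} =
    (\<lambda>u. (u, snd x)) ` {u. pnu \<nu> u = pnu \<nu> (fst x)}"
proof (intro equalityI subsetI)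
  fix x' assume "x' \<in> {x' \<in> Omega R1 R2 \<nu>. pinu \<nu> x' = pinu \<nu> x}"
  then have "pnu \<nu> (fst x') = pnu \<nu> (fst x)" "snd x' = snd x"
    by (auto simp: pinu_eq_iff)
  then show "x' \<in> (\<lambda>u. (u, snd x)) ` {u. pnu \<nu> u = pnu \<nu> (fst x)}"
    by (intro image_eqI[of _ _ "fst x'"]) (auto simp: prod_eq_iff)
next
  fix x' assume "x' \<in> (\<lambda>u. (u, snd x)) ` {u. pnu \<nu> u = pnu \<nu> (fst x)}"
  then obtain u where u: "x' = (u, snd x)" "pnu \<nu> u = pnu \<nu> (fst x)"
    by auto
  moreover have "fst x \<in> Anu R1 R2 \<nu>" "norm (snd x) < R1"
    using assms(2) by (auto simp: Omega_def mem_Times_iff)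
  ultimately show "x' \<in> {x' \<in> Omega R1 R2 \<nu>. pinu \<nu> x' = pinu \<nu> x}"
    using Anu_pnu_fibre[OF _ assms(1)] by (auto simp: Omega_def pinu_eq_iff)
qed

lemma pnu_fibre_size:
  assumes "0 < R1" "2 \<le> \<nu>" "u \<in> Anu R1 R2 \<nu>"
  shows "if \<nu> = \<infinity> then infinite {v. pnu \<nu> v = pnu \<nu> u}
    else finite {v. pnu \<nu> v = pnu \<nu> u} \<and> card {v. pnu \<nu> v = pnu \<nu> u} = the_enat \<nu>"
  using assms(2)
proof (cases rule: enat_ge_2_cases)
  case 1
  have "exp (u + of_nat (2 * k) * pi * \<i>) = exp u" for k :: nat
    unfolding exp_eq by (intro exI[of _ "int k"]) simp
  then have "range (\<lambda>k::nat. u + of_nat (2 * k) * pi * \<i>) \<subseteq> {v. pnu \<nu> v = pnu \<nu> u}"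
    using 1 by (auto simp: pnu_def)
  moreover have "inj (\<lambda>k::nat. u + of_nat (2 * k) * pi * \<i>)"
    by (auto intro!: injI simp: complex_eq_iff)
  ultimately show ?thesis
    using 1 range_inj_infinite infinite_super by auto
next
  case (2 n)
  have "u \<noteq> 0"
    using Anu_nonzero[OF assms] 2 by simp
  then have "card {v. pnu \<nu> v = pnu \<nu> u} = n"
    using 2 card_nth_roots[of "u ^ n" n] by (simp add: pnu_def)
  then show ?thesis
    using 2 card_ge_0_finite[of "{v. pnu \<nu> v = pnu \<nu> u}"] by simp
qed

lemma sheeted_Omega:
  assumes "0 < R1" "2 \<le> \<nu>"
  shows "sheeted (top_of_set (Omega R1 R2 \<nu>)) (pinu \<nu>) \<nu>"
  unfolding sheeted_def
proof
  fix z assume "z \<in> pinu \<nu> ` topspace (top_of_set (Omega R1 R2 \<nu>))"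
  then obtain x where x: "x \<in> Omega R1 R2 \<nu>" "z = pinu \<nu> x"
    by auto
  define R where "R = {u. pnu \<nu> u = pnu \<nu> (fst x)}"
  have "{x' \<in> topspace (top_of_set (Omega R1 R2 \<nu>)). pinu \<nu> x' = z} = (\<lambda>u. (u, snd x)) ` R"
    using pinu_fibre_Omega[OF assms(2) x(1)] x(2) by (simp add: R_def)
  moreover have inj: "inj_on (\<lambda>u. (u, snd x)) R"
    by (auto intro: inj_onI)
  moreover have "fst x \<in> Anu R1 R2 \<nu>"
    using x(1) by (auto simp: Omega_def mem_Times_iff)
  then have "if \<nu> = \<infinity> then infinite R else finite R \<and> card R = the_enat \<nu>"
    unfolding R_def by (rule pnu_fibre_size[OF assms])
  ultimately show "if \<nu> = \<infinity> then infinite {x' \<in> topspace (top_of_set (Omega R1 R2 \<nu>)). pinu \<nu> x' = z}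
      else finite {x' \<in> topspace (top_of_set (Omega R1 R2 \<nu>)). pinu \<nu> x' = z} \<and>
        card {x' \<in> topspace (top_of_set (Omega R1 R2 \<nu>)). pinu \<nu> x' = z} = the_enat \<nu>"
    using finite_image_iff[OF inj] card_image[OF inj] by (simp only:)
qed

lemma pinu_fibre_nontrivial:
  assumes "0 < R1" "2 \<le> \<nu>" "x \<in> Omega R1 R2 \<nu>"
  obtains x' where "x' \<in> Omega R1 R2 \<nu>" "x' \<noteq> x" "pinu \<nu> x' = pinu \<nu> x"
proof -
  let ?F = "{x' \<in> Omega R1 R2 \<nu>. pinu \<nu> x' = pinu \<nu> x}"
  have fibre: "if \<nu> = \<infinity> then infinite ?F else finite ?F \<and> card ?F = the_enat \<nu>"
    using sheeted_Omega[OF assms(1,2)] assms(3) unfolding sheeted_def by auto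
  have "\<not> ?F \<subseteq> {x}"
  proof
    assume "?F \<subseteq> {x}"
    then have "finite ?F" "card ?F \<le> 1"
      using finite_subset card_mono[of "{x}" ?F] by auto
    with assms(2) fibre show False
      by (cases rule: enat_ge_2_cases) auto
  qed
  then show ?thesis
    using that by blast
qed

definition branch_factor :: "enat \<Rightarrow> complex \<times> complex \<Rightarrow> complex" where
  "branch_factor \<nu> x = 1 + \<i> * snd x / pnu \<nu> (fst x)"

definition pnu_branch :: "enat \<Rightarrow> complex \<times> complex \<Rightarrow> complex" where
  "pnu_branch \<nu> x =
    (if \<nu> = \<infinity> then fst x + Ln (branch_factor \<nu> x)
     else fst x * exp (Ln (branch_factor \<nu> x) / of_nat (the_enat \<nu>)))"

lemma branch_factor_Re_pos:
  assumes "0 < R1" "2 \<le> \<nu>" "x \<in> Omega R1 R2 \<nu>"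
  shows "0 < Re (branch_factor \<nu> x)"
proof -
  have "norm (snd x) < R1" "R1 < norm (pnu \<nu> (fst x))"
    using assms(3) norm_pnu_gt[OF assms(1,2)] by (auto simp: Omega_def)
  then have "norm (\<i> * snd x / pnu \<nu> (fst x)) < 1"
    by (auto simp: norm_divide norm_mult divide_less_eq)
  then have "\<bar>Re (\<i> * snd x / pnu \<nu> (fst x))\<bar> < 1"
    using abs_Re_le_cmod le_less_trans by blast
  then show ?thesis
    by (simp add: branch_factor_def)
qed

lemma wcoord_pinu_factor:
  assumes "0 < R1" "2 \<le> \<nu>" "x \<in> Omega R1 R2 \<nu>"
  shows "pnu \<nu> (fst x) \<noteq> 0" "wcoord (pinu \<nu> x) = pnu \<nu> (fst x) * branch_factor \<nu> x"
proof -
  show "pnu \<nu> (fst x) \<noteq> 0"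
    using norm_pnu_gt[OF assms(1,2)] assms(1,3) by (fastforce simp: Omega_def)
  then show "wcoord (pinu \<nu> x) = pnu \<nu> (fst x) * branch_factor \<nu> x"
    by (simp add: wcoord_pinu branch_factor_def field_simps)
qed

lemma wcoord_pinu_nonzero:
  assumes "0 < R1" "2 \<le> \<nu>" "x \<in> Omega R1 R2 \<nu>"
  shows "wcoord (pinu \<nu> x) \<noteq> 0"
  using wcoord_pinu_factor[OF assms] branch_factor_Re_pos[OF assms] by auto

lemma wcoord_nonzero_pinu_image:
  assumes "0 < R1" "2 \<le> \<nu>" "U \<subseteq> Omega R1 R2 \<nu>" "z \<in> pinu \<nu> ` U"
  shows "wcoord z \<noteq> 0"
  using assms(4) wcoord_pinu_nonzero[OF assms(1,2)] assms(3) by blast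

lemma pnu_pnu_branch:
  assumes "0 < R1" "2 \<le> \<nu>" "x \<in> Omega R1 R2 \<nu>"
  shows "pnu \<nu> (pnu_branch \<nu> x) = wcoord (pinu \<nu> x)"
proof -
  have exp_Ln: "exp (Ln (branch_factor \<nu> x)) = branch_factor \<nu> x"
    using branch_factor_Re_pos[OF assms] by (intro exp_Ln) auto
  show ?thesis
    using assms(2)
  proof (cases rule: enat_ge_2_cases)
    case 1
    then show ?thesis
      using exp_Ln wcoord_pinu_factor[OF assms] by (simp add: pnu_branch_def pnu_def exp_add)
  next
    case (2 n)
    have "exp (Ln (branch_factor \<nu> x) / of_nat n) ^ n = branch_factor \<nu> x"
      using 2 exp_Ln by (simp add: exp_of_nat_mult[symmetric])
    then show ?thesis
      using 2 wcoord_pinu_factor[OF assms] by (simp add: pnu_branch_def pnu_def power_mult_distrib)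
  qed
qed

lemma pnu_branch_inj_on_fibre:
  assumes "2 \<le> \<nu>" "pinu \<nu> x = pinu \<nu> x'" "pnu_branch \<nu> x = pnu_branch \<nu> x'"
  shows "x = x'"
proof -
  have "branch_factor \<nu> x = branch_factor \<nu> x'" "snd x = snd x'"
    using assms(2) by (auto simp: pinu_eq_iff branch_factor_def)
  moreover have "fst x = fst x'"
    using assms(1,3) \<open>branch_factor \<nu> x = branch_factor \<nu> x'\<close>
    by (cases rule: enat_ge_2_cases) (auto simp: pnu_branch_def)
  ultimately show ?thesis
    by (simp add: prod_eq_iff)
qed

lemma continuous_on_pnu_branch:
  assumes "0 < R1" "2 \<le> \<nu>"
  shows "continuous_on (Omega R1 R2 \<nu>) (pnu_branch \<nu>)"
proof -
  have "continuous_on (Omega R1 R2 \<nu>) (\<lambda>x. pnu \<nu> (fst x))"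
    using continuous_on_compose2[OF continuous_on_pnu continuous_on_fst[OF continuous_on_id]] by blast
  moreover have "pnu \<nu> (fst x) \<noteq> 0" if "x \<in> Omega R1 R2 \<nu>" for x
    using wcoord_pinu_factor(1)[OF assms that] .
  ultimately have "continuous_on (Omega R1 R2 \<nu>) (branch_factor \<nu>)"
    unfolding branch_factor_def [abs_def] by (auto intro!: continuous_intros)
  moreover have "branch_factor \<nu> ` Omega R1 R2 \<nu> \<subseteq> - \<real>\<^sub>\<le>\<^sub>0"
    using branch_factor_Re_pos[OF assms] by (fastforce simp: complex_nonpos_Reals_iff)
  ultimately have Ln: "continuous_on (Omega R1 R2 \<nu>) (\<lambda>x. Ln (branch_factor \<nu> x))"
    using continuous_on_compose2[OF continuous_on_Ln[of "- \<real>\<^sub>\<le>\<^sub>0"]] by blast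
  show ?thesis
    using assms(2) Ln
    by (cases rule: enat_ge_2_cases) (auto simp: pnu_branch_def [abs_def] intro!: continuous_intros)
qed

lemma pnu_has_nonzero_derivative:
  assumes "2 \<le> \<nu>" "\<nu> = \<infinity> \<or> w \<noteq> 0"
  obtains e where "e \<noteq> 0" "(pnu \<nu> has_field_derivative e) (at w)"
  using assms(1)
proof (cases rule: enat_ge_2_cases)
  case 1
  then show ?thesis
    using that[of "exp w"] DERIV_exp[of w] by (simp add: pnu_def [abs_def])
next
  case (2 n)
  have "((\<lambda>u. u ^ n) has_field_derivative of_nat n * w ^ (n - 1)) (at w)"
    by (auto intro!: derivative_eq_intros)
  then show ?thesis
    using that[of "of_nat n * w ^ (n - 1)"] assms(2) 2 by (simp add: pnu_def [abs_def])
qed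

lemma hol_fun_pnu_branch:
  assumes "0 < R1" "2 \<le> \<nu>"
  shows "hol_fun (top_of_set (Omega R1 R2 \<nu>)) (pinu \<nu>) (pnu_branch \<nu>)"
proof (rule hol_fun_top_of_setI[OF pinu_locally_injective[OF assms]])
  fix U assume U: "open U" "U \<subseteq> Omega R1 R2 \<nu>" "inj_on (pinu \<nu>) U"
  note chart = homeomorphism_inj_chart[OF U(1) continuous_on_pinu U(3)]
  let ?G = "pnu_branch \<nu> \<circ> inv_into U (pinu \<nu>)"
  show "holo2 ?G (pinu \<nu> ` U)"
  proof (rule holo2_local_solution[where E = "pnu \<nu>", OF chart(1)])
    show "continuous_on (pinu \<nu> ` U) ?G"
      using chart(2) continuous_on_subset[OF continuous_on_pnu_branch[OF assms] U(2)]
      by (intro continuous_on_compose) (auto simp: homeomorphism_def)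
    fix z assume z: "z \<in> pinu \<nu> ` U"
    have "inv_into U (pinu \<nu>) z \<in> Omega R1 R2 \<nu>"
      using U(2) inv_into_into[OF z] by blast
    then show solves: "pnu \<nu> (?G z) = wcoord z"
      using pnu_pnu_branch[OF assms] f_inv_into_f[OF z] by simp
    have "\<nu> = \<infinity> \<or> ?G z \<noteq> 0"
      using assms(2) wcoord_nonzero_pinu_image[OF assms U(2) z] solves
      by (cases rule: enat_ge_2_cases) (auto simp: pnu_def power_0_left)
    then show "\<exists>e. e \<noteq> 0 \<and> (pnu \<nu> has_field_derivative e) (at (?G z))"
      using pnu_has_nonzero_derivative[OF assms(2)] by blast
  qed
qed

lemma hol_fun_inverse_wcoord_pinu:
  assumes "0 < R1" "2 \<le> \<nu>"
  shows "hol_fun (top_of_set (Omega R1 R2 \<nu>)) (pinu \<nu>) (\<lambda>x. inverse (wcoord (pinu \<nu> x)))"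
proof (rule hol_fun_top_of_setI[OF pinu_locally_injective[OF assms]])
  fix U assume U: "open U" "U \<subseteq> Omega R1 R2 \<nu>" "inj_on (pinu \<nu>) U"
  have "open (pinu \<nu> ` U)"
    using homeomorphism_inj_chart(1)[OF U(1) continuous_on_pinu U(3)] .
  then have "holo2 (\<lambda>z. inverse (wcoord z)) (pinu \<nu> ` U)"
    using wcoord_nonzero_pinu_image[OF assms U(2)] by (intro holo2_inverse holo2_wcoord)
  then show "holo2 ((\<lambda>x. inverse (wcoord (pinu \<nu> x))) \<circ> inv_into U (pinu \<nu>)) (pinu \<nu> ` U)"
    by (rule holo2_cong) (simp add: f_inv_into_f)
qed

lemma envelope_Omega_not_univalent:
  assumes R: "0 < R1" "ereal R1 < R2" "2 \<le> \<nu>"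
    and env: "is_envelope (top_of_set (Omega R1 R2 \<nu>)) (pinu \<nu>) Y q \<phi>"
  shows "\<not> univalent Y q"
proof -
  obtain x where x: "x \<in> Omega R1 R2 \<nu>"
    using Omega_nonempty[OF R] by blast
  obtain x' where x': "x' \<in> Omega R1 R2 \<nu>" "x' \<noteq> x" "pinu \<nu> x' = pinu \<nu> x"
    using pinu_fibre_nontrivial[OF R(1,3) x] by blast
  have "pnu_branch \<nu> x' \<noteq> pnu_branch \<nu> x"
    using pnu_branch_inj_on_fibre[OF R(3) x'(3)] x'(2) by blast
  then show ?thesis
    using env x x' hol_fun_pnu_branch[OF R(1,3)]
    by (intro extension_not_univalent[of "top_of_set (Omega R1 R2 \<nu>)" "pinu \<nu>" Y q \<phi>])
      (auto simp: is_envelope_def)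
qed

lemma envelope_Omega_omits_origin:
  assumes R: "0 < R1" "ereal R1 < R2" "2 \<le> \<nu>"
    and env: "is_envelope (top_of_set (Omega R1 R2 \<nu>)) (pinu \<nu>) Y q \<phi>"
  shows "(0, 0) \<notin> q ` topspace Y"
proof
  assume "(0, 0) \<in> q ` topspace Y"
  then obtain y where y: "(0, 0) = q y" "y \<in> topspace Y"
    by (rule imageE)
  have "wcoord (q y) \<noteq> 0"
    using env wcoord_pinu_nonzero[OF R(1,3)]
    by (intro extension_nonvanishing[OF riemann_domain_Omega[OF R] _ _ _ holo2_wcoord
          hol_fun_inverse_wcoord_pinu[OF R(1,3)] _ y(2)])
      (auto simp: is_envelope_def)
  moreover have "q y = (0, 0)"
    using y(1) by simp
  ultimately show False
    by (simp add: wcoord_def)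
qed

theorem mainTheorem5:
  fixes R1 :: real and R2 :: ereal and \<nu> :: enat
  assumes "0 < R1" and "ereal R1 < R2" and "2 \<le> \<nu>"
  shows "riemann_domain (subtopology euclidean (Omega R1 R2 \<nu>)) (pinu \<nu>) \<and>
         sheeted (subtopology euclidean (Omega R1 R2 \<nu>)) (pinu \<nu>) \<nu> \<and>
         hol_separable (subtopology euclidean (Omega R1 R2 \<nu>)) (pinu \<nu>) \<and>
         (\<forall>(Y :: 'b topology) q \<phi>.
            is_envelope (subtopology euclidean (Omega R1 R2 \<nu>)) (pinu \<nu>) Y q \<phi> \<longrightarrow>
            \<not> univalent Y q \<and> (0, 0) \<notin> q ` topspace Y)"
proof (intro conjI allI impI)
  show "riemann_domain (top_of_set (Omega R1 R2 \<nu>)) (pinu \<nu>)"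
    by (rule riemann_domain_Omega[OF assms])
  show "sheeted (top_of_set (Omega R1 R2 \<nu>)) (pinu \<nu>) \<nu>"
    by (rule sheeted_Omega[OF assms(1,3)])
  show "hol_separable (top_of_set (Omega R1 R2 \<nu>)) (pinu \<nu>)"
    using hol_fun_pnu_branch[OF assms(1,3)] pnu_branch_inj_on_fibre[OF assms(3)]
    by (rule hol_separableI) auto
  fix Y :: "'b topology" and q \<phi>
  assume "is_envelope (top_of_set (Omega R1 R2 \<nu>)) (pinu \<nu>) Y q \<phi>"
  then show "\<not> univalent Y q" "(0, 0) \<notin> q ` topspace Y"
    using envelope_Omega_not_univalent envelope_Omega_omits_origin assms by blast+
qed

end
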